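(* Let $f:[a,b]\to\mathbb{R}$ be twice differentiable with $|f''|\leq M$ on $[a,b]$. For all $\alpha\in f'([a,b])$ and all $x\in[a,b]$ such that $\|x\alpha+f(a)-a\alpha\|>M(b-a)^2$, we have \[ \lfloor f(x)\rfloor=\lfloor x\alpha+f(a)-a\alpha\rfloor. \]
   Context: $\|y\|$ denotes the distance from $y$ to the nearest integer; $\lfloor\cdot\rfloor$ is the floor function. *)

theory Defs
  imports Complex_Main
begin

definition dist_nearest_int :: "real \<Rightarrow> real" where
  "dist_nearest_int y = (INF k::int. \<bar>y - of_int k\<bar>)"

end

theory Submission
  imports Defs "HOL-Analysis.Analysis"
begin

text \<open>The first-order Taylor polynomial of \<open>f\<close> at \<open>a\<close>, taken with the slope \<open>f' c\<close> of any point
  \<open>c \<in> [a, b]\<close>, approximates \<open>f\<close> within \<open>M (b - a)\<^sup>2\<close>, since \<open>f'\<close> varies by at most \<open>M (b - a)\<close>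
  on the interval. An error below the distance of the linear value to the nearest integer cannot
  move it across an integer, so both floors agree.\<close>

lemma dist_nearest_int_le: "dist_nearest_int y \<le> \<bar>y - of_int k\<bar>"
  unfolding dist_nearest_int_def
  by (rule cINF_lower) (auto intro: bdd_belowI[where m=0])

lemma floor_eq_if_dist_less_dist_nearest_int:
  fixes y z :: real
  assumes "\<bar>z - y\<bar> < dist_nearest_int y"
  shows "\<lfloor>z\<rfloor> = \<lfloor>y\<rfloor>"
proof -
  have "dist_nearest_int y \<le> y - \<lfloor>y\<rfloor>"
    using dist_nearest_int_le[of y "\<lfloor>y\<rfloor>"] by simp
  moreover have "dist_nearest_int y \<le> \<lfloor>y\<rfloor> + 1 - y"
    using dist_nearest_int_le[of y "\<lfloor>y\<rfloor> + 1"] by linarith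
  ultimately show ?thesis
    using assms by (auto simp: floor_eq_iff abs_less_iff)
qed

lemma abs_diff_le_of_deriv_bound:
  fixes f f' :: "real \<Rightarrow> real"
  assumes "\<And>t. t \<in> {a..b} \<Longrightarrow> (f has_real_derivative f' t) (at t within {a..b})"
    and "\<And>t. t \<in> {a..b} \<Longrightarrow> \<bar>f' t\<bar> \<le> B"
    and "x \<in> {a..b}" "y \<in> {a..b}"
  shows "\<bar>f x - f y\<bar> \<le> B * (b - a)"
proof -
  have "B \<ge> 0" using assms(2,3) by fastforce
  have "norm (f x - f y) \<le> B * norm (x - y)"
    by (rule field_differentiable_bound[OF convex_real_interval(5) assms(1) _ assms(3,4)])
       (use assms(2) in auto)
  also have "\<dots> \<le> B * (b - a)"
    using assms(3,4) \<open>B \<ge> 0\<close> by (intro mult_left_mono) auto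
  finally show ?thesis by simp
qed

lemma linear_approx_error_le:
  fixes f f' f'' :: "real \<Rightarrow> real"
  assumes f_deriv: "\<And>t. t \<in> {a..b} \<Longrightarrow> (f has_real_derivative f' t) (at t within {a..b})"
    and f'_deriv: "\<And>t. t \<in> {a..b} \<Longrightarrow> (f' has_real_derivative f'' t) (at t within {a..b})"
    and bound: "\<And>t. t \<in> {a..b} \<Longrightarrow> \<bar>f'' t\<bar> \<le> M"
    and c: "c \<in> {a..b}" and x: "x \<in> {a..b}"
  shows "\<bar>f x - (x * f' c + f a - a * f' c)\<bar> \<le> M * (b - a)^2"
proof -
  define g where "g t = f t - t * f' c" for t
  have g_deriv: "(g has_real_derivative f' t - f' c) (at t within {a..b})" if "t \<in> {a..b}" for t
    unfolding g_def using f_deriv[OF that] by (auto intro!: derivative_eq_intros)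
  have "\<bar>f' t - f' c\<bar> \<le> M * (b - a)" if "t \<in> {a..b}" for t
    using abs_diff_le_of_deriv_bound[OF f'_deriv bound that c] .
  then have "\<bar>g x - g a\<bar> \<le> M * (b - a) * (b - a)"
    using x by (intro abs_diff_le_of_deriv_bound[OF g_deriv]) auto
  then show ?thesis
    by (simp add: g_def power2_eq_square algebra_simps)
qed

theorem lemma10:
  fixes f f' f'' :: "real \<Rightarrow> real" and a b M :: real
  assumes f_deriv: "\<And>x. x \<in> {a..b} \<Longrightarrow> (f has_real_derivative f' x) (at x within {a..b})"
    and f'_deriv: "\<And>x. x \<in> {a..b} \<Longrightarrow> (f' has_real_derivative f'' x) (at x within {a..b})"
    and bound: "\<And>x. x \<in> {a..b} \<Longrightarrow> \<bar>f'' x\<bar> \<le> M"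
  shows "\<forall>\<alpha> \<in> f' ` {a..b}. \<forall>x \<in> {a..b}.
           dist_nearest_int (x * \<alpha> + f a - a * \<alpha>) > M * (b - a)^2 \<longrightarrow>
           \<lfloor>f x\<rfloor> = \<lfloor>x * \<alpha> + f a - a * \<alpha>\<rfloor>"
proof (intro ballI impI)
  fix \<alpha> x
  assume "\<alpha> \<in> f' ` {a..b}" and x: "x \<in> {a..b}"
    and far: "dist_nearest_int (x * \<alpha> + f a - a * \<alpha>) > M * (b - a)^2"
  then obtain c where c: "c \<in> {a..b}" and "\<alpha> = f' c" by auto
  then have "\<bar>f x - (x * \<alpha> + f a - a * \<alpha>)\<bar> \<le> M * (b - a)^2"
    using linear_approx_error_le[OF f_deriv f'_deriv bound c x] by simp
  with far show "\<lfloor>f x\<rfloor> = \<lfloor>x * \<alpha> + f a - a * \<alpha>\<rfloor>"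
    by (intro floor_eq_if_dist_less_dist_nearest_int) linarith
qed

end
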